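(* Let $\mathcal{A}=\{1,\dots,L\}$ and let $Q_T$ be a pmf on $\mathcal{A}$ with $Q_T(a)>0$ for all $a$ and $Q_T\neq U_L$. Let $I>\log_2L$ and, for each $n$, let $\mathcal{S}_n=\{a^n\in\mathcal{A}^n: H(\pi(a^n),Q_T)\le I\}$ and $P_{A^n}=U_{\mathcal{S}_n}$ (the uniform pmf on $\mathcal{S}_n$). Then $D(P_{A^n}\|Q_T^n)$ scales linearly with $n$: there exist constants $0<c_1\le c_2<\infty$ such that $c_1n\le D(P_{A^n}\|Q_T^n)\le c_2n$ for all sufficiently large $n$.
   Context: $U_L$ is the uniform pmf on $\mathcal{A}$. $H(P,Q)=-\sum_{a:P(a)>0}P(a)\log_2Q(a)$ is cross entropy; $D(\cdot\|\cdot)$ is informational divergence in bits; $Q_T^n$ is the iid pmf on $\mathcal{A}^n$. The empirical pmf of $a^n$ is $\pi(a^n)=\frac1n[n_1,\dots,n_L]$, with $n_i$ the number of occurrences of letter $i$. *)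

theory Defs
  imports Complex_Main
begin

definition is_pmf :: "'a set \<Rightarrow> ('a \<Rightarrow> real) \<Rightarrow> bool" where
  "is_pmf A P \<longleftrightarrow> (\<forall>a\<in>A. 0 \<le> P a) \<and> (\<Sum>a\<in>A. P a) = 1"

definition uniform_on :: "'a set \<Rightarrow> 'a \<Rightarrow> real" where
  "uniform_on S x = (if x \<in> S then 1 / real (card S) else 0)"

definition seqs :: "nat \<Rightarrow> nat \<Rightarrow> nat list set" where
  "seqs L n = {xs. length xs = n \<and> set xs \<subseteq> {1..L}}"

definition emp_pmf :: "nat list \<Rightarrow> nat \<Rightarrow> real" where
  "emp_pmf xs a = real (count_list xs a) / real (length xs)"

definition cross_entropy :: "'a set \<Rightarrow> ('a \<Rightarrow> real) \<Rightarrow> ('a \<Rightarrow> real) \<Rightarrow> real" where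
  "cross_entropy A P Q = - (\<Sum>a\<in>{a\<in>A. 0 < P a}. P a * log 2 (Q a))"

definition divergence :: "'a set \<Rightarrow> ('a \<Rightarrow> real) \<Rightarrow> ('a \<Rightarrow> real) \<Rightarrow> real" where
  "divergence X P Q = (\<Sum>x\<in>{x\<in>X. 0 < P x}. P x * log 2 (P x / Q x))"

definition iid_pmf :: "(nat \<Rightarrow> real) \<Rightarrow> nat list \<Rightarrow> real" where
  "iid_pmf Q xs = prod_list (map Q xs)"

definition typical_set :: "nat \<Rightarrow> (nat \<Rightarrow> real) \<Rightarrow> real \<Rightarrow> nat \<Rightarrow> nat list set" where
  "typical_set L Q I n = {xs \<in> seqs L n. cross_entropy {1..L} (emp_pmf xs) Q \<le> I}"

end

theory Submission
  imports Defs
begin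

(* With self_info Q x = -log2 Q^n(x) the typical set is S_n = {x. self_info Q x <= n I}, and
   D(U_S || Q^n) is the average of self_info Q over S minus log2 |S|; this gives the upper
   bound n I at once.  For the lower bound, Gibbs' inequality against the iid measure
   proportional to Q^u gives log2 |S| <= u avg_S (self_info Q) + n log2 (sum_a Q(a)^u); the
   cases u = 1 and u = 1 - tau combine to D >= tau log2 |S| - n log2 (sum_a Q(a)^(1-tau)),
   and the last logarithm is tau H(Q) + o(tau) because its derivative at tau = 0 is H(Q).
   It remains to show that |S_n| exceeds 2^(n (H(Q) + c)) for some c > 0.  Since Q is not
   uniform, H(Q) < log2 L < I, so a small mixture R of Q with the uniform pmf still has
   H(R,Q) < I but has entropy H(R) > H(Q); by Chebyshev's inequality most of the R^n-mass
   sits on sequences in S_n of probability about 2^(-n H(R)), so there are about 2^(n H(R))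
   of them. *)

lemma cross_entropy_eq_sum:
  assumes "\<forall>a\<in>A. 0 < P a"
  shows "cross_entropy A P R = - (\<Sum>a\<in>A. P a * log 2 (R a))"
proof -
  have "{a\<in>A. 0 < P a} = A" using assms by blast
  then show ?thesis unfolding cross_entropy_def by simp
qed

lemma divergence_eq_cross_entropy_diff:
  assumes "\<forall>x\<in>X. 0 < P x \<longrightarrow> 0 < W x"
  shows "divergence X P W = cross_entropy X P W - cross_entropy X P P"
proof -
  have "divergence X P W = (\<Sum>x\<in>{x\<in>X. 0 < P x}. P x * log 2 (P x) - P x * log 2 (W x))"
    unfolding divergence_def using assms by (intro sum.cong) (auto simp: log_divide algebra_simps)
  then show ?thesis unfolding cross_entropy_def by (simp add: sum_subtractf)
qed

lemma diff_le_mult_ln_divide: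
  fixes p r :: real
  assumes "0 < p" "0 < r"
  shows "p - r \<le> p * ln (p / r)" and "p \<noteq> r \<Longrightarrow> p - r < p * ln (p / r)"
proof -
  have eq: "p * ln (p / r) = p - r + p * ((r / p - 1) - ln (r / p))"
    using assms by (simp add: ln_div field_simps)
  have le: "ln (r / p) \<le> r / p - 1" using assms by (intro ln_le_minus_one) simp
  then show "p - r \<le> p * ln (p / r)" unfolding eq using assms by simp
  assume "p \<noteq> r"
  then have "ln (r / p) \<noteq> r / p - 1" using assms ln_eq_minus_one[of "r / p"] by auto
  with le show "p - r < p * ln (p / r)" unfolding eq using assms by simp
qed

lemma divergence_pos:
  assumes "finite A" "is_pmf A P" "\<forall>a\<in>A. 0 < R a" "sum R A \<le> 1"
    and "\<exists>a\<in>A. 0 < P a \<and> P a \<noteq> R a"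
  shows "0 < divergence A P R"
proof -
  define B where "B = {a\<in>A. 0 < P a}"
  have B: "finite B" "B \<subseteq> A" using assms(1) unfolding B_def by auto
  have "0 \<le> (\<Sum>a\<in>B. P a - R a)"
  proof -
    have "sum P B = sum P A"
      using assms(1,2) B unfolding B_def is_pmf_def by (intro sum.mono_neutral_left) auto
    moreover have "sum R B \<le> sum R A"
      using assms(1,3) B by (intro sum_mono2) (auto intro: less_imp_le)
    ultimately show ?thesis using assms(2,4) by (simp add: sum_subtractf is_pmf_def)
  qed
  also have "\<dots> < (\<Sum>a\<in>B. P a * ln (P a / R a))"
  proof (rule sum_strict_mono_ex1[OF B(1)])
    show "\<forall>a\<in>B. P a - R a \<le> P a * ln (P a / R a)"
      using assms(3) B unfolding B_def by (auto intro: diff_le_mult_ln_divide(1))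
    show "\<exists>a\<in>B. P a - R a < P a * ln (P a / R a)"
      using assms(3,5) unfolding B_def by (auto intro: diff_le_mult_ln_divide(2))
  qed
  also have "\<dots> = ln 2 * divergence A P R"
    unfolding divergence_def B_def by (simp add: log_def sum_distrib_left)
  finally show ?thesis by (simp add: zero_less_mult_iff)
qed

lemma divergence_nonneg:
  assumes "finite A" "is_pmf A P" "\<forall>a\<in>A. 0 < R a" "sum R A \<le> 1"
  shows "0 \<le> divergence A P R"
proof (cases "\<exists>a\<in>A. 0 < P a \<and> P a \<noteq> R a")
  case True
  then show ?thesis using divergence_pos[OF assms] by simp
next
  case False
  then have "divergence A P R = 0" unfolding divergence_def by (intro sum.neutral) auto
  then show ?thesis by simp
qed

lemma entropy_le_cross_entropy:
  assumes "finite A" "is_pmf A P" "\<forall>a\<in>A. 0 < R a" "sum R A \<le> 1"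
  shows "cross_entropy A P P \<le> cross_entropy A P R"
  using divergence_nonneg[OF assms] divergence_eq_cross_entropy_diff[of A P R] assms(3) by simp

lemma entropy_less_cross_entropy:
  assumes "finite A" "is_pmf A P" "\<forall>a\<in>A. 0 < R a" "sum R A \<le> 1"
    and "\<exists>a\<in>A. 0 < P a \<and> P a \<noteq> R a"
  shows "cross_entropy A P P < cross_entropy A P R"
  using divergence_pos[OF assms] divergence_eq_cross_entropy_diff[of A P R] assms(3) by simp

lemma is_pmf_uniform_on:
  assumes "finite S" "S \<noteq> {}"
  shows "is_pmf S (uniform_on S)"
  using assms by (simp add: is_pmf_def uniform_on_def)

lemma cross_entropy_uniform_on:
  assumes "finite S" "S \<noteq> {}" "S \<subseteq> X"
  shows "cross_entropy X (uniform_on S) W = - (\<Sum>x\<in>S. log 2 (W x)) / real (card S)"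
proof -
  have "{x\<in>X. 0 < uniform_on S x} = S"
    using assms by (auto simp: uniform_on_def card_gt_0_iff)
  then show ?thesis
    unfolding cross_entropy_def by (simp add: uniform_on_def sum_divide_distrib)
qed

lemma entropy_uniform_on:
  assumes "finite S" "S \<noteq> {}" "S \<subseteq> X"
  shows "cross_entropy X (uniform_on S) (uniform_on S) = log 2 (real (card S))"
  using assms by (simp add: cross_entropy_uniform_on uniform_on_def log_divide card_gt_0_iff)

lemma cross_entropy_uniform_on_right:
  assumes "finite A" "is_pmf A P"
  shows "cross_entropy A P (uniform_on A) = log 2 (real (card A))"
proof -
  have "A \<noteq> {}" using assms(2) by (auto simp: is_pmf_def)
  have "cross_entropy A P (uniform_on A) = - (\<Sum>a\<in>{a\<in>A. 0 < P a}. P a) * log 2 (1 / real (card A))"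
    unfolding cross_entropy_def uniform_on_def by (simp add: sum_distrib_right)
  also have "(\<Sum>a\<in>{a\<in>A. 0 < P a}. P a) = 1"
    using assms unfolding is_pmf_def by (subst sum.mono_neutral_left) force+
  finally show ?thesis using assms(1) \<open>A \<noteq> {}\<close> by (simp add: log_divide card_gt_0_iff)
qed

lemma convex_combination_pos:
  fixes p q t :: real
  assumes "0 < p" "0 < q" "0 \<le> t" "t \<le> 1"
  shows "0 < (1 - t) * p + t * q"
  using assms by (cases "t = 1") (auto intro: add_pos_nonneg)

lemma cross_entropy_mixture:
  assumes "\<forall>a\<in>A. 0 < P a" "\<forall>a\<in>A. 0 < P' a" "0 \<le> t" "t \<le> 1"
  shows "cross_entropy A (\<lambda>a. (1 - t) * P a + t * P' a) W
       = (1 - t) * cross_entropy A P W + t * cross_entropy A P' W"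
proof -
  have "(\<Sum>a\<in>A. ((1 - t) * P a + t * P' a) * log 2 (W a))
      = (1 - t) * (\<Sum>a\<in>A. P a * log 2 (W a)) + t * (\<Sum>a\<in>A. P' a * log 2 (W a))"
    by (simp only: distrib_right sum.distrib mult.assoc sum_distrib_left)
  then show ?thesis
    using assms by (simp add: cross_entropy_eq_sum convex_combination_pos)
qed

lemma entropy_mixture_ge:
  assumes "finite A" "is_pmf A P" "is_pmf A P'" "\<forall>a\<in>A. 0 < P a" "\<forall>a\<in>A. 0 < P' a"
    and "0 \<le> t" "t \<le> 1"
  defines "M \<equiv> \<lambda>a. (1 - t) * P a + t * P' a"
  shows "(1 - t) * cross_entropy A P P + t * cross_entropy A P' P' \<le> cross_entropy A M M"
proof -
  have M_pos: "\<forall>a\<in>A. 0 < M a" using assms(4-7) unfolding M_def by (simp add: convex_combination_pos)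
  have "sum M A = (1 - t) * sum P A + t * sum P' A"
    unfolding M_def by (simp add: sum.distrib sum_distrib_left)
  then have "sum M A \<le> 1" using assms(2,3) by (simp add: is_pmf_def)
  then have "cross_entropy A P P \<le> cross_entropy A P M" "cross_entropy A P' P' \<le> cross_entropy A P' M"
    using assms(1-3) M_pos by (simp_all add: entropy_le_cross_entropy)
  then show ?thesis
    using assms(4-7) unfolding M_def by (simp add: cross_entropy_mixture add_mono mult_left_mono)
qed

lemma entropy_less_log_card:
  assumes "finite A" "is_pmf A P" "\<exists>a\<in>A. 0 < P a \<and> P a \<noteq> uniform_on A a"
  shows "cross_entropy A P P < log 2 (real (card A))"
proof -
  have "A \<noteq> {}" using assms(2) by (auto simp: is_pmf_def)
  then have "\<forall>a\<in>A. 0 < uniform_on A a" "sum (uniform_on A) A = 1"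
    using assms(1) by (simp_all add: uniform_on_def card_gt_0_iff)
  then have "cross_entropy A P P < cross_entropy A P (uniform_on A)"
    using assms(3) by (intro entropy_less_cross_entropy[OF assms(1,2)]) simp_all
  then show ?thesis using cross_entropy_uniform_on_right[OF assms(1,2)] by simp
qed

lemma obtain_mixture_of_larger_entropy:
  fixes Q :: "nat \<Rightarrow> real"
  assumes Q: "\<forall>a\<in>{1..L}. 0 < Q a" "sum Q {1..L} = 1"
    and nonuniform: "\<exists>a\<in>{1..L}. Q a \<noteq> uniform_on {1..L} a" and I: "log 2 (real L) < I"
  obtains R where "\<forall>a\<in>{1..L}. 0 < R a" "sum R {1..L} = 1" "cross_entropy {1..L} R Q < I"
    "cross_entropy {1..L} Q Q < cross_entropy {1..L} R R"
proof -
  define A where "A = {1..L}"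
  define U where "U = uniform_on A"
  define H where "H = cross_entropy A Q Q"
  have A: "finite A" "A \<noteq> {}" "card A = L"
    using Q(2) unfolding A_def by (simp, metis sum.empty zero_neq_one, simp)
  have U: "\<forall>a\<in>A. 0 < U a" "is_pmf A U" "sum U A = 1"
    using A(1,2) by (simp_all add: U_def uniform_on_def is_pmf_uniform_on card_gt_0_iff)
  have Q': "\<forall>a\<in>A. 0 < Q a" "is_pmf A Q" using Q unfolding A_def is_pmf_def by (simp_all add: less_imp_le)
  have H_less: "H < log 2 (real L)"
    using entropy_less_log_card[OF A(1) Q'(2)] nonuniform Q'(1) A(3) unfolding H_def A_def by auto
  have "((\<lambda>t. (1 - t) * H + t * cross_entropy A U Q) \<longlongrightarrow> (1 - 0) * H + 0 * cross_entropy A U Q) (at_right 0)"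
    by (intro tendsto_intros)
  then have "\<forall>\<^sub>F t in at_right 0. (1 - t) * H + t * cross_entropy A U Q < I"
    using H_less I by (auto intro: order_tendstoD(2))
  moreover have "\<forall>\<^sub>F t in at_right (0::real). t < 1"
    unfolding eventually_at_right_field by (intro exI[of _ 1]) auto
  ultimately have "\<forall>\<^sub>F t in at_right 0. 0 < t \<and> t < 1 \<and> (1 - t) * H + t * cross_entropy A U Q < I"
    using eventually_at_right_less[of 0] by eventually_elim blast
  then obtain t where t: "0 < t" "t < 1" "(1 - t) * H + t * cross_entropy A U Q < I"
    using eventually_happens'[OF trivial_limit_at_right_real] by blast
  define R where "R a = (1 - t) * Q a + t * U a" for a
  have "(1 - t) * H + t * log 2 (real L) \<le> cross_entropy A R R"
    using entropy_mixture_ge[OF A(1) Q'(2) U(2) Q'(1) U(1), of t] t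
      entropy_uniform_on[OF A(1,2) order_refl] A(3) unfolding R_def U_def H_def by simp
  moreover have "H < (1 - t) * H + t * log 2 (real L)"
    using t H_less by (simp add: algebra_simps)
  moreover have "cross_entropy A R Q < I"
    using t Q'(1) U(1) unfolding R_def H_def by (simp add: cross_entropy_mixture)
  moreover have "sum R A = (1 - t) * sum Q A + t * sum U A"
    unfolding R_def by (simp add: sum.distrib sum_distrib_left)
  then have "sum R A = 1" using Q(2) U(3) unfolding A_def by simp
  moreover have "\<forall>a\<in>A. 0 < R a"
    using t Q'(1) U(1) unfolding R_def by (simp add: convex_combination_pos)
  ultimately show ?thesis using that unfolding A_def H_def by force
qed

lemma has_real_derivative_log_sum_powr:
  assumes "finite A" "\<forall>a\<in>A. 0 < Q a" "sum Q A = 1"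
  shows "((\<lambda>\<tau>. log 2 (\<Sum>a\<in>A. Q a powr (1 - \<tau>))) has_real_derivative cross_entropy A Q Q) (at 0)"
proof -
  have abs_Q: "\<bar>Q a\<bar> = Q a" if "a \<in> A" for a using assms(2) that by (simp add: abs_of_pos)
  have "(\<Sum>a\<in>A. - (ln (Q a) * Q a)) = ln 2 * cross_entropy A Q Q"
    using assms(2) by (simp add: cross_entropy_eq_sum log_def sum_distrib_left sum_negf mult.commute)
  then show ?thesis
    using assms by (auto intro!: derivative_eq_intros simp: abs_Q cong: sum.cong)
qed

lemma eventually_log_sum_powr_le:
  assumes "finite A" "\<forall>a\<in>A. 0 < Q a" "sum Q A = 1" "0 < \<epsilon>"
  shows "\<forall>\<^sub>F \<tau> in at_right 0. log 2 (\<Sum>a\<in>A. Q a powr (1 - \<tau>)) \<le> \<tau> * (cross_entropy A Q Q + \<epsilon>)"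
proof -
  define f where "f \<tau> = log 2 (\<Sum>a\<in>A. Q a powr (1 - \<tau>))" for \<tau>
  have "(\<Sum>a\<in>A. \<bar>Q a\<bar>) = 1"
    using assms(2,3) by (metis (no_types, lifting) abs_of_pos sum.cong)
  then have "f 0 = 0" unfolding f_def by simp
  then have "((\<lambda>\<tau>. f \<tau> / \<tau>) \<longlongrightarrow> cross_entropy A Q Q) (at 0)"
    using has_real_derivative_log_sum_powr[OF assms(1-3)] unfolding has_field_derivative_iff f_def
    by simp
  then have "((\<lambda>\<tau>. f \<tau> / \<tau>) \<longlongrightarrow> cross_entropy A Q Q) (at_right 0)"
    by (rule filterlim_mono) (simp_all add: at_le)
  then have "\<forall>\<^sub>F \<tau> in at_right 0. f \<tau> / \<tau> < cross_entropy A Q Q + \<epsilon>"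
    using assms(4) by (intro order_tendstoD(2)) auto
  then show ?thesis
    using eventually_at_right_less[of 0]
    by eventually_elim (simp add: f_def divide_less_eq mult.commute less_imp_le)
qed

lemma finite_seqs: "finite (seqs L n)"
  unfolding seqs_def using finite_lists_length_eq[of "{1..L}" n] by (simp add: conj_commute)

lemma seqs_0 [simp]: "seqs L 0 = {[]}"
  by (auto simp: seqs_def)

lemma seqs_Suc: "seqs L (Suc n) = (\<lambda>(a, xs). a # xs) ` ({1..L} \<times> seqs L n)"
proof (intro equalityI subsetI)
  fix x assume "x \<in> seqs L (Suc n)"
  then obtain a xs where "x = a # xs" "a \<in> {1..L}" "xs \<in> seqs L n"
    unfolding seqs_def by (cases x) auto
  then show "x \<in> (\<lambda>(a, xs). a # xs) ` ({1..L} \<times> seqs L n)" by force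
qed (auto simp: seqs_def)

lemma sum_seqs_Suc:
  "(\<Sum>x\<in>seqs L (Suc n). F x) = (\<Sum>a\<in>{1..L}. \<Sum>xs\<in>seqs L n. F (a # xs))"
proof -
  have "inj_on (\<lambda>(a, xs). a # xs) ({1..L} \<times> seqs L n)" by (auto simp: inj_on_def)
  then show ?thesis
    unfolding seqs_Suc by (simp add: sum.reindex sum.cartesian_product case_prod_unfold)
qed

lemma sum_prod_list_seqs:
  "(\<Sum>x\<in>seqs L n. prod_list (map f x)) = (\<Sum>a\<in>{1..L}. f a :: real) ^ n"
proof (induction n)
  case (Suc n)
  have "(\<Sum>x\<in>seqs L (Suc n). prod_list (map f x))
      = (\<Sum>a\<in>{1..L}. f a * (\<Sum>xs\<in>seqs L n. prod_list (map f xs)))"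
    by (simp add: sum_seqs_Suc sum_distrib_left)
  then show ?case using Suc by (simp add: sum_distrib_right[symmetric])
qed simp

lemma sum_prod_list_sum_list_seqs:
  assumes "(\<Sum>a\<in>{1..L}. R a) = (1::real)" "(\<Sum>a\<in>{1..L}. R a * g a) = 0"
  shows "(\<Sum>x\<in>seqs L n. prod_list (map R x) * sum_list (map g x)) = 0"
proof (induction n)
  case (Suc n)
  have "(\<Sum>x\<in>seqs L (Suc n). prod_list (map R x) * sum_list (map g x))
     = (\<Sum>a\<in>{1..L}. R a * g a * (\<Sum>xs\<in>seqs L n. prod_list (map R xs))
          + R a * (\<Sum>xs\<in>seqs L n. prod_list (map R xs) * sum_list (map g xs)))"
    by (simp add: sum_seqs_Suc sum_distrib_left sum.distrib algebra_simps)
  also have "\<dots> = 0"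
    using Suc assms by (simp add: sum_prod_list_seqs sum_distrib_right[symmetric])
  finally show ?case .
qed simp

lemma sum_prod_list_sum_list_squared_seqs:
  assumes "(\<Sum>a\<in>{1..L}. R a) = (1::real)" "(\<Sum>a\<in>{1..L}. R a * g a) = 0"
  shows "(\<Sum>x\<in>seqs L n. prod_list (map R x) * (sum_list (map g x))\<^sup>2)
       = real n * (\<Sum>a\<in>{1..L}. R a * (g a)\<^sup>2)"
proof (induction n)
  case (Suc n)
  have "(\<Sum>x\<in>seqs L (Suc n). prod_list (map R x) * (sum_list (map g x))\<^sup>2)
     = (\<Sum>a\<in>{1..L}. R a * (g a)\<^sup>2 * (\<Sum>xs\<in>seqs L n. prod_list (map R xs))
          + 2 * R a * g a * (\<Sum>xs\<in>seqs L n. prod_list (map R xs) * sum_list (map g xs))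
          + R a * (\<Sum>xs\<in>seqs L n. prod_list (map R xs) * (sum_list (map g xs))\<^sup>2))"
    by (simp add: sum_seqs_Suc sum_distrib_left sum.distrib algebra_simps power2_eq_square)
  also have "\<dots> = (\<Sum>a\<in>{1..L}. R a * (g a)\<^sup>2 + R a * (real n * (\<Sum>a\<in>{1..L}. R a * (g a)\<^sup>2)))"
    using Suc assms by (simp add: sum_prod_list_seqs sum_prod_list_sum_list_seqs)
  also have "\<dots> = (\<Sum>a\<in>{1..L}. R a * (g a)\<^sup>2) + (\<Sum>a\<in>{1..L}. R a) * (real n * (\<Sum>a\<in>{1..L}. R a * (g a)\<^sup>2))"
    by (simp only: sum.distrib sum_distrib_right)
  finally show ?case using assms(1) by (simp add: algebra_simps)
qed simp

lemma sum_prod_list_deviation_le: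
  fixes R f :: "nat \<Rightarrow> real"
  assumes R: "\<forall>a\<in>{1..L}. 0 \<le> R a" "(\<Sum>a\<in>{1..L}. R a) = 1" and "0 < n" "0 < \<delta>"
  defines "m \<equiv> \<Sum>a\<in>{1..L}. R a * f a"
  shows "(\<Sum>x\<in>{x\<in>seqs L n. real n * \<delta> \<le> \<bar>sum_list (map f x) - real n * m\<bar>}. prod_list (map R x))
       \<le> (\<Sum>a\<in>{1..L}. R a * (f a - m)\<^sup>2) / (real n * \<delta>\<^sup>2)"
proof -
  define g where "g a = f a - m" for a
  define D where "D = {x\<in>seqs L n. real n * \<delta> \<le> \<bar>sum_list (map f x) - real n * m\<bar>}"
  have "(\<Sum>a\<in>{1..L}. R a * g a) = 0"
    using R(2) unfolding g_def m_def by (simp add: algebra_simps sum_subtractf sum_distrib_right[symmetric])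
  note moments = sum_prod_list_sum_list_squared_seqs[OF R(2) this]
  have sum_g: "sum_list (map g x) = sum_list (map f x) - real n * m" if "x \<in> seqs L n" for x
    using that unfolding g_def seqs_def by (simp add: sum_list_subtractf sum_list_triv)
  have weight_nonneg: "0 \<le> prod_list (map R x)" if "x \<in> seqs L n" for x
    using that R(1) unfolding seqs_def by (intro prod_list_nonneg) auto
  have nd: "0 < real n * \<delta>" using assms by simp
  have "(\<Sum>x\<in>D. prod_list (map R x)) \<le> (\<Sum>x\<in>D. prod_list (map R x) * (sum_list (map g x))\<^sup>2 / (real n * \<delta>)\<^sup>2)"
  proof (rule sum_mono)
    fix x assume x: "x \<in> D"
    then have "(real n * \<delta>)\<^sup>2 \<le> (sum_list (map g x))\<^sup>2"
      using nd sum_g unfolding D_def by (auto simp: abs_le_square_iff[symmetric])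
    then have "1 \<le> (sum_list (map g x))\<^sup>2 / (real n * \<delta>)\<^sup>2" using nd assms(3,4) by (subst le_divide_eq_1_pos) auto
    from mult_left_mono[OF this weight_nonneg] x
    show "prod_list (map R x) \<le> prod_list (map R x) * (sum_list (map g x))\<^sup>2 / (real n * \<delta>)\<^sup>2"
      unfolding D_def by simp
  qed
  also have "\<dots> \<le> (\<Sum>x\<in>seqs L n. prod_list (map R x) * (sum_list (map g x))\<^sup>2 / (real n * \<delta>)\<^sup>2)"
    using finite_seqs weight_nonneg by (intro sum_mono2) (auto simp: D_def)
  also have "\<dots> = real n * (\<Sum>a\<in>{1..L}. R a * (g a)\<^sup>2) / (real n * \<delta>)\<^sup>2"
    by (simp add: moments sum_divide_distrib[symmetric])
  also have "\<dots> = (\<Sum>a\<in>{1..L}. R a * (f a - m)\<^sup>2) / (real n * \<delta>\<^sup>2)"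
    using assms(3) by (simp add: g_def power2_eq_square)
  finally show ?thesis unfolding D_def .
qed

lemma eventually_sum_prod_list_deviation_le:
  fixes R f :: "nat \<Rightarrow> real"
  assumes R: "\<forall>a\<in>{1..L}. 0 \<le> R a" "(\<Sum>a\<in>{1..L}. R a) = 1" and "0 < \<delta>" "0 < \<epsilon>"
  shows "\<forall>\<^sub>F n in sequentially.
    (\<Sum>x\<in>{x\<in>seqs L n. real n * \<delta> \<le> \<bar>sum_list (map f x) - real n * (\<Sum>a\<in>{1..L}. R a * f a)\<bar>}.
      prod_list (map R x)) \<le> \<epsilon>"
proof -
  define v where "v = (\<Sum>a\<in>{1..L}. R a * (f a - (\<Sum>b\<in>{1..L}. R b * f b))\<^sup>2)"
  have "\<forall>\<^sub>F n in sequentially. v / \<delta>\<^sup>2 / real n < \<epsilon>"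
    using assms(4) by (intro order_tendstoD(2)[OF lim_const_over_n])
  moreover have "\<forall>\<^sub>F n in sequentially. 0 < n"
    by (rule eventually_gt_at_top)
  ultimately show ?thesis
  proof eventually_elim
    case (elim n)
    then show ?case
      using sum_prod_list_deviation_le[OF R _ assms(3), of n f] unfolding v_def
      by (simp add: field_simps)
  qed
qed

lemma eventually_sum_prod_list_jointly_typical_ge:
  fixes R f g :: "nat \<Rightarrow> real"
  assumes R: "\<forall>a\<in>{1..L}. 0 \<le> R a" "(\<Sum>a\<in>{1..L}. R a) = 1" and "0 < \<eta>" "0 < \<delta>"
  shows "\<forall>\<^sub>F n in sequentially. 1 / 2 \<le> (\<Sum>x\<in>{x\<in>seqs L n.
           \<bar>sum_list (map f x) - real n * (\<Sum>a\<in>{1..L}. R a * f a)\<bar> < real n * \<eta> \<and>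
           \<bar>sum_list (map g x) - real n * (\<Sum>a\<in>{1..L}. R a * g a)\<bar> < real n * \<delta>}. prod_list (map R x))"
proof -
  have quarter: "(0::real) < 1 / 4" by simp
  show ?thesis
    using eventually_sum_prod_list_deviation_le[OF R assms(3) quarter, where f = f]
      eventually_sum_prod_list_deviation_le[OF R assms(4) quarter, where f = g]
  proof eventually_elim
    case (elim n)
    define w where "w x = prod_list (map R x)" for x
    define G where "G = {x\<in>seqs L n.
      \<bar>sum_list (map f x) - real n * (\<Sum>a\<in>{1..L}. R a * f a)\<bar> < real n * \<eta> \<and>
      \<bar>sum_list (map g x) - real n * (\<Sum>a\<in>{1..L}. R a * g a)\<bar> < real n * \<delta>}"
    define B1 where "B1 = {x\<in>seqs L n. real n * \<eta> \<le> \<bar>sum_list (map f x) - real n * (\<Sum>a\<in>{1..L}. R a * f a)\<bar>}"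
    define B2 where "B2 = {x\<in>seqs L n. real n * \<delta> \<le> \<bar>sum_list (map g x) - real n * (\<Sum>a\<in>{1..L}. R a * g a)\<bar>}"
    have fin: "finite G" "finite B1" "finite B2" unfolding G_def B1_def B2_def by (simp_all add: finite_seqs)
    have w_nonneg: "0 \<le> w x" if "x \<in> seqs L n" for x
      using that R(1) unfolding w_def seqs_def by (intro prod_list_nonneg) auto
    have "seqs L n = G \<union> (B1 \<union> B2)" "G \<inter> (B1 \<union> B2) = {}"
      unfolding G_def B1_def B2_def by auto
    then have "1 = sum w G + sum w (B1 \<union> B2)"
      using fin sum_prod_list_seqs[of R L n] R(2) unfolding w_def by (simp add: sum.union_disjoint)
    also have "\<dots> \<le> sum w G + (sum w B1 + sum w B2)"
    proof -
      have "0 \<le> sum w (B1 \<inter> B2)" using w_nonneg unfolding B1_def by (intro sum_nonneg) auto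
      then show ?thesis using fin by (simp add: sum_Un)
    qed
    also have "\<dots> \<le> sum w G + 1 / 2" using elim unfolding w_def B1_def B2_def by simp
    finally show ?case unfolding G_def w_def by simp
  qed
qed

definition self_info :: "('a \<Rightarrow> real) \<Rightarrow> 'a list \<Rightarrow> real" where
  "self_info Q xs = (\<Sum>a\<leftarrow>xs. - log 2 (Q a))"

lemma iid_pmf_eq_powr_self_info:
  assumes "\<forall>a\<in>set xs. 0 < Q a"
  shows "iid_pmf Q xs = 2 powr (- self_info Q xs)"
  using assms by (induction xs) (simp_all add: iid_pmf_def self_info_def powr_diff powr_minus_divide)

lemma self_info_powr:
  assumes "\<forall>a\<in>set xs. 0 < Q a"
  shows "self_info (\<lambda>a. Q a powr u) xs = u * self_info Q xs"
  using assms by (induction xs) (simp_all add: self_info_def log_powr algebra_simps)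

lemma iid_pmf_powr_eq_powr_self_info:
  assumes "\<forall>a\<in>set xs. 0 < Q a"
  shows "iid_pmf (\<lambda>a. Q a powr u) xs = 2 powr (- (u * self_info Q xs))"
proof -
  have "\<forall>a\<in>set xs. 0 < Q a powr u" using assms by auto
  then show ?thesis by (simp add: iid_pmf_eq_powr_self_info self_info_powr[OF assms])
qed

lemma positive_on_seqs:
  assumes "\<forall>a\<in>{1..L}. 0 < Q a" "xs \<in> seqs L n"
  shows "\<forall>a\<in>set xs. 0 < Q a"
  using assms by (auto simp: seqs_def)

lemma sum_list_map_eq_sum_of_nat_count:
  fixes f :: "'a \<Rightarrow> 'b::semiring_1"
  assumes "finite X" "set xs \<subseteq> X"
  shows "sum_list (map f xs) = (\<Sum>a\<in>X. of_nat (count_list xs a) * f a)"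
  using assms(2)
proof (induction xs)
  case (Cons y ys)
  have "(\<Sum>a\<in>X. of_nat (count_list (y # ys) a) * f a)
      = (\<Sum>a\<in>X. of_nat (count_list ys a) * f a + (if y = a then f a else 0))"
    by (intro sum.cong) (auto simp: algebra_simps)
  also have "\<dots> = (\<Sum>a\<in>X. of_nat (count_list ys a) * f a) + f y"
    using Cons.prems assms(1) by (simp add: sum.distrib)
  finally show ?case using Cons by (simp add: add.commute)
qed simp

lemma cross_entropy_emp_pmf:
  assumes "xs \<in> seqs L n" "0 < n"
  shows "cross_entropy {1..L} (emp_pmf xs) Q = self_info Q xs / real n"
proof -
  have len: "length xs = n" and set_xs: "set xs \<subseteq> {1..L}" using assms(1) by (auto simp: seqs_def)
  have "cross_entropy {1..L} (emp_pmf xs) Q = (\<Sum>a\<in>{1..L}. emp_pmf xs a * - log 2 (Q a))"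
    unfolding cross_entropy_def sum_negf[symmetric] mult_minus_right
    by (rule sum.mono_neutral_left) (auto simp: emp_pmf_def)
  also have "\<dots> = self_info Q xs / real n"
    using sum_list_map_eq_sum_of_nat_count[OF _ set_xs, of "\<lambda>a. - log 2 (Q a)"]
    by (simp add: emp_pmf_def len self_info_def sum_divide_distrib)
  finally show ?thesis .
qed

lemma typical_set_eq:
  assumes "0 < n"
  shows "typical_set L Q I n = {xs \<in> seqs L n. self_info Q xs \<le> real n * I}"
  unfolding typical_set_def
proof (intro Collect_cong conj_cong refl)
  fix xs assume "xs \<in> seqs L n"
  then show "cross_entropy {1..L} (emp_pmf xs) Q \<le> I \<longleftrightarrow> self_info Q xs \<le> real n * I"
    using assms by (subst cross_entropy_emp_pmf) (auto simp: divide_le_eq mult.commute)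
qed

lemma cross_entropy_uniform_on_iid_pmf:
  assumes "\<forall>a\<in>{1..L}. 0 < Q a" "S \<subseteq> seqs L n" "S \<noteq> {}"
  shows "cross_entropy (seqs L n) (uniform_on S) (iid_pmf Q) = (\<Sum>x\<in>S. self_info Q x) / real (card S)"
proof -
  have "finite S" using assms(2) finite_seqs by (rule finite_subset)
  moreover have "log 2 (iid_pmf Q x) = - self_info Q x" if "x \<in> S" for x
  proof -
    have "x \<in> seqs L n" using that assms(2) by blast
    then show ?thesis using iid_pmf_eq_powr_self_info[OF positive_on_seqs[OF assms(1)]] by simp
  qed
  ultimately show ?thesis
    using assms by (simp add: cross_entropy_uniform_on sum_negf)
qed

lemma divergence_uniform_on_iid_pmf:
  assumes "\<forall>a\<in>{1..L}. 0 < Q a" "S \<subseteq> seqs L n" "S \<noteq> {}"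
  shows "divergence (seqs L n) (uniform_on S) (iid_pmf Q)
       = cross_entropy (seqs L n) (uniform_on S) (iid_pmf Q) - log 2 (real (card S))"
proof -
  have "0 < iid_pmf Q x" if "x \<in> seqs L n" for x
    using assms(1) that by (simp add: iid_pmf_eq_powr_self_info positive_on_seqs)
  moreover have "finite S" using assms(2) finite_seqs by (rule finite_subset)
  ultimately show ?thesis
    using assms by (simp add: divergence_eq_cross_entropy_diff entropy_uniform_on)
qed

lemma log_card_le_tilted:
  assumes Q: "\<forall>a\<in>{1..L}. 0 < Q a" and S: "S \<subseteq> seqs L n" "S \<noteq> {}"
  shows "log 2 (real (card S))
       \<le> u * cross_entropy (seqs L n) (uniform_on S) (iid_pmf Q) + real n * log 2 (\<Sum>a\<in>{1..L}. Q a powr u)"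
proof -
  define Z where "Z = (\<Sum>a\<in>{1..L}. Q a powr u)"
  define W where "W x = iid_pmf (\<lambda>a. Q a powr u) x / Z ^ n" for x
  have fin: "finite S" using S(1) finite_seqs by (rule finite_subset)
  have iid_Qu: "iid_pmf (\<lambda>a. Q a powr u) x = 2 powr (- (u * self_info Q x))" if "x \<in> seqs L n" for x
    using iid_pmf_powr_eq_powr_self_info[OF positive_on_seqs[OF Q that]] .
  have sum_iid: "(\<Sum>x\<in>seqs L n. iid_pmf (\<lambda>a. Q a powr u) x) = Z ^ n"
    unfolding Z_def iid_pmf_def by (rule sum_prod_list_seqs)
  obtain x0 where x0: "x0 \<in> seqs L n" using S by blast
  have Zn: "0 < Z ^ n"
    unfolding sum_iid[symmetric] by (rule sum_pos2[OF finite_seqs x0]) (simp_all add: iid_Qu x0)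
  have W_pos: "\<forall>x\<in>S. 0 < W x" using S(1) iid_Qu Zn unfolding W_def by auto
  have "sum W S \<le> (\<Sum>x\<in>seqs L n. W x)"
    using S(1) finite_seqs W_pos iid_Qu Zn unfolding W_def by (intro sum_mono2) auto
  also have "\<dots> = 1"
    unfolding W_def sum_divide_distrib[symmetric] sum_iid using Zn by (intro divide_self) linarith
  finally have "cross_entropy S (uniform_on S) (uniform_on S) \<le> cross_entropy S (uniform_on S) W"
    using fin S(2) W_pos by (intro entropy_le_cross_entropy is_pmf_uniform_on)
  also have "\<dots> = (\<Sum>x\<in>S. u * self_info Q x + real n * log 2 Z) / real (card S)"
  proof -
    have "0 \<le> Z" unfolding Z_def by (intro sum_nonneg) simp
    then have "log 2 (W x) = - (u * self_info Q x + real n * log 2 Z)" if "x \<in> S" for x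
    proof -
      have x: "x \<in> seqs L n" using that S(1) by blast
      have "log 2 (W x) = log 2 (iid_pmf (\<lambda>a. Q a powr u) x) - log 2 (Z ^ n)"
        unfolding W_def by (rule log_divide_pos) (simp_all add: iid_Qu[OF x] Zn)
      then show ?thesis by (simp add: iid_Qu[OF x] log_nat_power[OF \<open>0 \<le> Z\<close>])
    qed
    then show ?thesis using fin S(2) by (simp add: cross_entropy_uniform_on sum_negf[symmetric] add.commute)
  qed
  also have "\<dots> = u * cross_entropy (seqs L n) (uniform_on S) (iid_pmf Q) + real n * log 2 Z"
    using fin S(2) by (simp add: cross_entropy_uniform_on_iid_pmf[OF Q S] sum.distrib
        sum_distrib_left[symmetric] add_divide_distrib)
  finally show ?thesis using fin S(2) by (simp add: entropy_uniform_on Z_def)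
qed

lemma divergence_uniform_on_iid_pmf_ge:
  assumes Q: "\<forall>a\<in>{1..L}. 0 < Q a" "sum Q {1..L} = 1"
    and S: "S \<subseteq> seqs L n" "S \<noteq> {}"
    and \<tau>: "0 \<le> \<tau>" "log 2 (\<Sum>a\<in>{1..L}. Q a powr (1 - \<tau>)) \<le> \<tau> * h"
  shows "\<tau> * (log 2 (real (card S)) - real n * h) \<le> divergence (seqs L n) (uniform_on S) (iid_pmf Q)"
proof -
  define H where "H = cross_entropy (seqs L n) (uniform_on S) (iid_pmf Q)"
  have "(\<Sum>a\<in>{1..L}. Q a powr 1) = 1"
    using Q by (metis (no_types, lifting) less_imp_le powr_one sum.cong)
  then have "log 2 (real (card S)) \<le> H"
    using log_card_le_tilted[OF Q(1) S, of 1] unfolding H_def by simp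
  then have "\<tau> * log 2 (real (card S)) \<le> \<tau> * H" using \<tau>(1) by (rule mult_left_mono)
  moreover have "log 2 (real (card S)) \<le> (1 - \<tau>) * H + real n * log 2 (\<Sum>a\<in>{1..L}. Q a powr (1 - \<tau>))"
    unfolding H_def by (rule log_card_le_tilted[OF Q(1) S])
  moreover have "real n * log 2 (\<Sum>a\<in>{1..L}. Q a powr (1 - \<tau>)) \<le> real n * (\<tau> * h)"
    using \<tau>(2) by (rule mult_left_mono) simp
  ultimately show ?thesis
    using divergence_uniform_on_iid_pmf[OF Q(1) S] unfolding H_def by (simp add: algebra_simps)
qed

lemma divergence_uniform_on_iid_pmf_le:
  assumes "\<forall>a\<in>{1..L}. 0 < Q a" "S \<subseteq> seqs L n" "S \<noteq> {}" "\<forall>x\<in>S. self_info Q x \<le> c"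
  shows "divergence (seqs L n) (uniform_on S) (iid_pmf Q) \<le> c"
proof -
  have fin: "finite S" using assms(2) finite_seqs by (rule finite_subset)
  then have "(\<Sum>x\<in>S. self_info Q x) \<le> real (card S) * c"
    using sum_mono[of S "self_info Q" "\<lambda>_. c"] assms(4) by simp
  moreover have "1 \<le> card S" using fin assms(3) by (simp add: Suc_leI card_gt_0_iff)
  ultimately have "(\<Sum>x\<in>S. self_info Q x) / real (card S) \<le> c" "0 \<le> log 2 (real (card S))"
    by (simp_all add: divide_le_eq mult.commute)
  then show ?thesis
    using divergence_uniform_on_iid_pmf[OF assms(1-3)] cross_entropy_uniform_on_iid_pmf[OF assms(1-3)]
    by simp
qed

lemma log_card_ge_of_mass:
  fixes w :: "'a \<Rightarrow> real"
  assumes "finite S" "G \<subseteq> S" "0 < c" "c \<le> sum w G" "\<forall>x\<in>G. w x \<le> 2 powr (- b)"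
  shows "0 < card S" and "log 2 c + b \<le> log 2 (real (card S))"
proof -
  have "c \<le> real (card G) * 2 powr (- b)"
    using assms(4,5) sum_mono[of G w "\<lambda>_. 2 powr (- b)"] by simp
  also have "\<dots> \<le> real (card S) * 2 powr (- b)"
    using card_mono[OF assms(1,2)] by (intro mult_right_mono) simp_all
  finally have le: "c * 2 powr b \<le> real (card S)"
    by (simp add: powr_minus_divide le_divide_eq)
  moreover have pos: "0 < c * 2 powr b" using assms(3) by simp
  ultimately have "0 < real (card S)" by linarith
  then show "0 < card S" by simp
  have "log 2 c + b = log 2 (c * 2 powr b)" using assms(3) by (simp add: log_mult)
  also have "\<dots> \<le> log 2 (real (card S))"
    using le pos \<open>0 < real (card S)\<close> by (subst log_le_cancel_iff) simp_all
  finally show "log 2 c + b \<le> log 2 (real (card S))" .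
qed

lemma eventually_log_card_typical_set_ge:
  fixes Q R :: "nat \<Rightarrow> real"
  assumes R: "\<forall>a\<in>{1..L}. 0 < R a" "sum R {1..L} = 1"
    and RQ: "cross_entropy {1..L} R Q < I" and "0 < \<delta>"
  shows "\<forall>\<^sub>F n in sequentially. typical_set L Q I n \<noteq> {} \<and>
           real n * (cross_entropy {1..L} R R - \<delta>) - 1 \<le> log 2 (real (card (typical_set L Q I n)))"
proof -
  define H where "H = cross_entropy {1..L} R R"
  have R_nonneg: "\<forall>a\<in>{1..L}. 0 \<le> R a" using R(1) by (simp add: less_imp_le)
  have means: "(\<Sum>a\<in>{1..L}. R a * - log 2 (Q a)) = cross_entropy {1..L} R Q"
    "(\<Sum>a\<in>{1..L}. R a * - log 2 (R a)) = H"
    using R(1) unfolding H_def by (simp_all add: cross_entropy_eq_sum sum_negf)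
  have "0 < I - cross_entropy {1..L} R Q" using RQ by simp
  from eventually_sum_prod_list_jointly_typical_ge[OF R_nonneg R(2) this \<open>0 < \<delta>\<close>,
      where f = "\<lambda>a. - log 2 (Q a)" and g = "\<lambda>a. - log 2 (R a)"]
  have "\<forall>\<^sub>F n in sequentially. 1 / 2 \<le> (\<Sum>x\<in>{x\<in>seqs L n.
           \<bar>self_info Q x - real n * cross_entropy {1..L} R Q\<bar> < real n * (I - cross_entropy {1..L} R Q) \<and>
           \<bar>self_info R x - real n * H\<bar> < real n * \<delta>}. iid_pmf R x)"
    unfolding means self_info_def iid_pmf_def .
  with eventually_gt_at_top[of 0] show ?thesis
  proof eventually_elim
    case (elim n)
    define G where "G = {x\<in>seqs L n.
      \<bar>self_info Q x - real n * cross_entropy {1..L} R Q\<bar> < real n * (I - cross_entropy {1..L} R Q) \<and>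
      \<bar>self_info R x - real n * H\<bar> < real n * \<delta>}"
    have "G \<subseteq> typical_set L Q I n"
      using elim(1) unfolding G_def typical_set_eq[OF elim(1)] by (auto simp: algebra_simps)
    moreover have "\<forall>x\<in>G. iid_pmf R x \<le> 2 powr (- (real n * (H - \<delta>)))"
    proof
      fix x assume "x \<in> G"
      then have "x \<in> seqs L n" "real n * (H - \<delta>) < self_info R x"
        unfolding G_def by (auto simp: algebra_simps)
      then show "iid_pmf R x \<le> 2 powr (- (real n * (H - \<delta>)))"
        using iid_pmf_eq_powr_self_info[OF positive_on_seqs[OF R(1)]] by simp
    qed
    moreover have "finite (typical_set L Q I n)" by (simp add: typical_set_def finite_seqs)
    ultimately show ?case
      using log_card_ge_of_mass[of _ G "1 / 2" "iid_pmf R"] elim(2)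
      unfolding G_def[symmetric] H_def[symmetric] by (auto simp: log_divide)
  qed
qed

lemma divergence_uniform_on_typical_set_le:
  assumes "\<forall>a\<in>{1..L}. 0 < Q a" "0 < n" "typical_set L Q I n \<noteq> {}"
  shows "divergence (seqs L n) (uniform_on (typical_set L Q I n)) (iid_pmf Q) \<le> real n * I"
proof -
  have "typical_set L Q I n \<subseteq> seqs L n" by (auto simp: typical_set_def)
  moreover have "\<forall>x\<in>typical_set L Q I n. self_info Q x \<le> real n * I"
    using typical_set_eq[OF assms(2)] by auto
  ultimately show ?thesis using divergence_uniform_on_iid_pmf_le[OF assms(1) _ assms(3)] by blast
qed

lemma eventually_divergence_uniform_on_typical_set_ge:
  fixes Q :: "nat \<Rightarrow> real"
  assumes Q: "\<forall>a\<in>{1..L}. 0 < Q a" "sum Q {1..L} = 1"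
    and nonuniform: "\<exists>a\<in>{1..L}. Q a \<noteq> uniform_on {1..L} a" and I: "log 2 (real L) < I"
  obtains c where "0 < c" "\<forall>\<^sub>F n in sequentially. typical_set L Q I n \<noteq> {} \<and>
    c * real n \<le> divergence (seqs L n) (uniform_on (typical_set L Q I n)) (iid_pmf Q)"
proof -
  define H where "H = cross_entropy {1..L} Q Q"
  obtain R where R: "\<forall>a\<in>{1..L}. 0 < R a" "sum R {1..L} = 1" "cross_entropy {1..L} R Q < I"
    "H < cross_entropy {1..L} R R"
    using obtain_mixture_of_larger_entropy[OF Q nonuniform I] unfolding H_def by blast
  define \<epsilon> where "\<epsilon> = (cross_entropy {1..L} R R - H) / 4"
  have \<epsilon>: "0 < \<epsilon>" using R(4) by (simp add: \<epsilon>_def)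
  have H_R: "cross_entropy {1..L} R R - \<epsilon> = H + 3 * \<epsilon>" unfolding \<epsilon>_def by (simp add: field_simps)
  have "\<forall>\<^sub>F \<tau> in at_right 0. 0 < \<tau> \<and> log 2 (\<Sum>a\<in>{1..L}. Q a powr (1 - \<tau>)) \<le> \<tau> * (H + \<epsilon>)"
    using eventually_at_right_less[of 0] eventually_log_sum_powr_le[OF finite_atLeastAtMost Q \<epsilon>]
    unfolding H_def by eventually_elim simp
  then obtain \<tau> where \<tau>: "0 < \<tau>" "log 2 (\<Sum>a\<in>{1..L}. Q a powr (1 - \<tau>)) \<le> \<tau> * (H + \<epsilon>)"
    using eventually_happens'[OF trivial_limit_at_right_real] by blast
  have "\<forall>\<^sub>F n in sequentially. typical_set L Q I n \<noteq> {} \<and>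
    \<tau> * \<epsilon> * real n \<le> divergence (seqs L n) (uniform_on (typical_set L Q I n)) (iid_pmf Q)"
    using eventually_log_card_typical_set_ge[OF R(1-3) \<epsilon>]
      filterlim_real_sequentially[unfolded filterlim_at_top, rule_format, of "1 / \<epsilon>"]
  proof eventually_elim
    case (elim n)
    define S where "S = typical_set L Q I n"
    have S: "S \<subseteq> seqs L n" "S \<noteq> {}" and log_card: "real n * (H + 3 * \<epsilon>) - 1 \<le> log 2 (real (card S))"
      using elim(1) unfolding S_def H_R typical_set_def by auto
    have "1 \<le> real n * \<epsilon>" using elim(2) \<epsilon> by (simp add: field_simps)
    then have "\<epsilon> * real n \<le> log 2 (real (card S)) - real n * (H + \<epsilon>)"
      using log_card by (simp add: algebra_simps)
    then have "\<tau> * \<epsilon> * real n \<le> \<tau> * (log 2 (real (card S)) - real n * (H + \<epsilon>))"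
      using \<tau>(1) by (simp add: mult.assoc mult_left_mono)
    also have "\<dots> \<le> divergence (seqs L n) (uniform_on S) (iid_pmf Q)"
      using \<tau> by (intro divergence_uniform_on_iid_pmf_ge[OF Q S]) simp_all
    finally show ?case using S(2) unfolding S_def by simp
  qed
  moreover have "0 < \<tau> * \<epsilon>" using \<tau>(1) \<epsilon> by simp
  ultimately show ?thesis by (rule that[rotated])
qed

theorem lemma6:
  fixes L :: nat and Q :: "nat \<Rightarrow> real" and I :: real
  assumes "is_pmf {1..L} Q"
    and "\<forall>a\<in>{1..L}. 0 < Q a"
    and "\<exists>a\<in>{1..L}. Q a \<noteq> uniform_on {1..L} a"
    and "I > log 2 (real L)"
  shows "\<exists>c1 c2. 0 < c1 \<and> c1 \<le> c2 \<and>
           (\<forall>\<^sub>F n in sequentially.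
              c1 * real n \<le> divergence (seqs L n) (uniform_on (typical_set L Q I n)) (iid_pmf Q)
            \<and> divergence (seqs L n) (uniform_on (typical_set L Q I n)) (iid_pmf Q) \<le> c2 * real n)"
proof -
  have Q: "\<forall>a\<in>{1..L}. 0 < Q a" "sum Q {1..L} = 1" using assms(1,2) unfolding is_pmf_def by auto
  obtain c1 where c1: "0 < c1" "\<forall>\<^sub>F n in sequentially. typical_set L Q I n \<noteq> {} \<and>
    c1 * real n \<le> divergence (seqs L n) (uniform_on (typical_set L Q I n)) (iid_pmf Q)"
    using eventually_divergence_uniform_on_typical_set_ge[OF Q assms(3,4)] by blast
  define c2 where "c2 = max c1 I"
  have "\<forall>\<^sub>F n in sequentially.
              c1 * real n \<le> divergence (seqs L n) (uniform_on (typical_set L Q I n)) (iid_pmf Q)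
            \<and> divergence (seqs L n) (uniform_on (typical_set L Q I n)) (iid_pmf Q) \<le> c2 * real n"
    using c1(2) eventually_gt_at_top[of 0]
  proof eventually_elim
    case (elim n)
    have "divergence (seqs L n) (uniform_on (typical_set L Q I n)) (iid_pmf Q) \<le> real n * I"
      using elim by (intro divergence_uniform_on_typical_set_le[OF Q(1)]) simp_all
    also have "\<dots> \<le> c2 * real n"
      unfolding mult.commute[of "real n"] by (rule mult_right_mono) (simp_all add: c2_def)
    finally show ?case using elim by simp
  qed
  moreover have "c1 \<le> c2" unfolding c2_def by simp
  ultimately show ?thesis using c1(1) by blast
qed

end
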